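(* Let $\mathcal{N}\in\mathbb{C}^{n\times n}$ be Hermitian positive definite. Then the projection $\Pi(P_\sharp,R_\sharp)=P_\sharp(R_\sharp^*AP_\sharp)^{-1}R_\sharp^*A$ is $\mathcal{N}$-orthogonal if and only if $\mathcal{N}$ can be written in the form $\mathcal{N}=V_r^{-*}\widetilde{\mathcal{D}}^*\widetilde{\mathcal{D}}V_r^{-1}$ for some invertible block-diagonal matrix $$\widetilde{\mathcal{D}}=\begin{bmatrix}\mathcal{U}_{cc}&0\\0&\mathcal{U}_{ff}\end{bmatrix},$$ where $\mathcal{U}_{cc}\in\mathbb{C}^{n_c\times n_c}$ and $\mathcal{U}_{ff}\in\mathbb{C}^{n_f\times n_f}$ are upper triangular.
   Context: Let $A,M\in\mathbb{C}^{n\times n}$ be nonsingular with $M^{-1}A$ and $M^{-*}A^*$ diagonalizable. Let $V_r=[\bm v_{r,1},\dots,\bm v_{r,n}]$ and $V_l=[\bm v_{l,1},\dots,\bm v_{l,n}]$ be invertible matrices of right and left generalized eigenvectors of the pencil $(A,M)$, i.e. $AV_r=MV_r\Lambda$ and $V_l^*A=\Lambda V_l^*M$ with $\Lambda=\mathrm{diag}(\lambda_1,\dots,\lambda_n)$, chosen so that $V_l^*AV_r=D_a$ and $V_l^*MV_r=D_m$ are diagonal, and with the eigenvalues ordered so that $|1-\lambda_1|\ge|1-\lambda_2|\ge\cdots\ge|1-\lambda_n|\ge0$. Fix $n_c\in\{1,\dots,n\}$ and $n_f=n-n_c$. $P_\sharp,R_\sharp\in\mathbb{C}^{n\times n_c}$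 are any matrices with $\mathrm{range}(P_\sharp)=\mathrm{span}\{\bm v_{r,1},\dots,\bm v_{r,n_c}\}$ and $\mathrm{range}(R_\sharp)=\mathrm{span}\{\bm v_{l,1},\dots,\bm v_{l,n_c}\}$ (then $R_\sharp^*AP_\sharp$ is invertible). For Hermitian positive definite $\mathcal{N}$, $\langle x,y\rangle_{\mathcal N}=y^*\mathcal N x$; a matrix $Z$ is $\mathcal N$-orthogonal if $\langle Zx,y\rangle_{\mathcal N}=\langle x,Zy\rangle_{\mathcal N}$ for all $x,y\in\mathbb{C}^n$. *)

theory Defs
  imports "Jordan_Normal_Form.Schur_Decomposition"
begin

definition mat_inv :: "complex mat \<Rightarrow> complex mat" where
  "mat_inv B = (SOME C. inverts_mat B C \<and> inverts_mat C B)"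

definition diagonalizable :: "complex mat \<Rightarrow> bool" where
  "diagonalizable B \<longleftrightarrow> (\<exists>D. diagonal_mat D \<and> similar_mat B D)"

definition col_space :: "complex mat \<Rightarrow> complex vec set" where
  "col_space B = (\<lambda>x. B *\<^sub>v x) ` carrier_vec (dim_col B)"

definition first_cols :: "complex mat \<Rightarrow> nat \<Rightarrow> complex mat" where
  "first_cols B k = mat (dim_row B) k (\<lambda>(i,j). B $$ (i,j))"

definition hpd :: "nat \<Rightarrow> complex mat \<Rightarrow> bool" where
  "hpd n N \<longleftrightarrow> N \<in> carrier_mat n n \<and> mat_adjoint N = N \<and>
     (\<forall>x \<in> carrier_vec n. x \<noteq> 0\<^sub>v n \<longrightarrow> Re ((N *\<^sub>v x) \<bullet>c x) > 0)"

definition N_inner :: "complex mat \<Rightarrow> complex vec \<Rightarrow> complex vec \<Rightarrow> complex" where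
  "N_inner N x y = (N *\<^sub>v x) \<bullet>c y"

definition N_orthogonal :: "nat \<Rightarrow> complex mat \<Rightarrow> complex mat \<Rightarrow> bool" where
  "N_orthogonal n N Z \<longleftrightarrow>
     (\<forall>x \<in> carrier_vec n. \<forall>y \<in> carrier_vec n. N_inner N (Z *\<^sub>v x) y = N_inner N x (Z *\<^sub>v y))"

definition proj_Pi :: "complex mat \<Rightarrow> complex mat \<Rightarrow> complex mat \<Rightarrow> complex mat" where
  "proj_Pi A P R = P * mat_inv (mat_adjoint R * A * P) * mat_adjoint R * A"

end

(*
  The column-space hypotheses give P = Vr J T and R = Vl J S, where J consists of the first nc
  columns of the identity and T, S are invertible, and such right factors do not change
  Pi(P,R) = P (R^* A P)^-1 R^* A.  Since D = Vl^* A Vr is diagonal, J^* D = (J^* D J) J^*, whence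
  Pi Vr = Vr E for the coordinate projection E = J J^*.  So Pi is N-orthogonal, i.e.
  N Pi = Pi^* N, iff the Hermitian positive definite matrix G = Vr^* N Vr commutes with E, i.e. is
  block diagonal.  Cholesky factorisation of its two diagonal blocks writes such a G as D^* D with
  D = diag(Ucc, Uff), and conversely every such D^* D is block diagonal; conjugating back by Vr^-1
  gives the stated form of N.
*)

theory Submission
  imports Defs
begin

section \<open>Adjoints and inverses\<close>

lemma mat_adjoint_altdef: "mat_adjoint (A :: complex mat) = mat (dim_col A) (dim_row A) (\<lambda>(i,j). cnj (A $$ (j,i)))"
  by (rule eq_matI) (auto simp: mat_adjoint_def mat_of_rows_def)

lemma carrier_mat_adjoint [simp]: "(A :: complex mat) \<in> carrier_mat n m \<Longrightarrow> mat_adjoint A \<in> carrier_mat m n"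
  by (simp add: mat_adjoint_altdef)

lemma dim_mat_adjoint [simp]:
  "dim_row (mat_adjoint (A :: complex mat)) = dim_col A" "dim_col (mat_adjoint A) = dim_row A"
  by (simp_all add: mat_adjoint_altdef)

lemma index_mat_adjoint [simp]:
  "i < dim_col (A :: complex mat) \<Longrightarrow> j < dim_row A \<Longrightarrow> mat_adjoint A $$ (i,j) = cnj (A $$ (j,i))"
  by (simp add: mat_adjoint_altdef)

lemma mat_adjoint_adjoint [simp]: "mat_adjoint (mat_adjoint (A :: complex mat)) = A"
  by (rule eq_matI) auto

lemma mat_adjoint_one [simp]: "mat_adjoint (1\<^sub>m n :: complex mat) = 1\<^sub>m n"
  by (rule eq_matI) auto

lemma mat_adjoint_zero [simp]: "mat_adjoint (0\<^sub>m n m :: complex mat) = 0\<^sub>m m n"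
  by (rule eq_matI) auto

lemma mat_adjoint_mult:
  assumes "(A :: complex mat) \<in> carrier_mat n m" "B \<in> carrier_mat m k"
  shows "mat_adjoint (A * B) = mat_adjoint B * mat_adjoint A"
  using assms by (intro eq_matI) (auto simp: scalar_prod_def mult.commute)

lemma mat_adjoint_four_block_mat:
  assumes "(A :: complex mat) \<in> carrier_mat n1 m1" "B \<in> carrier_mat n1 m2"
    "C \<in> carrier_mat n2 m1" "D \<in> carrier_mat n2 m2"
  shows "mat_adjoint (four_block_mat A B C D) =
    four_block_mat (mat_adjoint A) (mat_adjoint C) (mat_adjoint B) (mat_adjoint D)"
  using assms by (intro eq_matI) auto

lemma cscalar_prod_mult_mat_vec:
  assumes M: "(M :: complex mat) \<in> carrier_mat n m" and x: "x \<in> carrier_vec m" and y: "y \<in> carrier_vec n"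
  shows "(M *\<^sub>v x) \<bullet>c y = x \<bullet>c (mat_adjoint M *\<^sub>v y)"
proof -
  have "(M *\<^sub>v x) \<bullet>c y = (\<Sum>i<n. \<Sum>j<m. M $$ (i,j) * x $ j * cnj (y $ i))"
    using M x y by (simp add: scalar_prod_def lessThan_atLeast0 sum_distrib_right)
  also have "\<dots> = (\<Sum>j<m. \<Sum>i<n. M $$ (i,j) * x $ j * cnj (y $ i))"
    by (rule sum.swap)
  also have "\<dots> = x \<bullet>c (mat_adjoint M *\<^sub>v y)"
    using M x y by (simp add: scalar_prod_def lessThan_atLeast0 sum_distrib_left mult_ac)
  finally show ?thesis .
qed

lemma mult_mat_vec_zero [simp]: "(A :: complex mat) \<in> carrier_mat n m \<Longrightarrow> A *\<^sub>v 0\<^sub>v m = 0\<^sub>v n"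
  by (intro eq_vecI) (auto simp: scalar_prod_def)

lemma invertible_matI:
  assumes B: "(B :: complex mat) \<in> carrier_mat n n" and C: "C \<in> carrier_mat n n" and CB: "C * B = 1\<^sub>m n"
  shows "invertible_mat B"
proof -
  have "B * C = 1\<^sub>m n" by (rule mat_mult_left_right_inverse[OF C B CB])
  with CB B C show ?thesis
    unfolding invertible_mat_def inverts_mat_def by (intro conjI exI[of _ C]) auto
qed

lemma mat_inv:
  assumes B: "(B :: complex mat) \<in> carrier_mat n n" and "invertible_mat B"
  shows "mat_inv B \<in> carrier_mat n n" "B * mat_inv B = 1\<^sub>m n" "mat_inv B * B = 1\<^sub>m n"
proof -
  obtain C where "inverts_mat B C \<and> inverts_mat C B"
    using \<open>invertible_mat B\<close> unfolding invertible_mat_def by blast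
  hence "inverts_mat B (mat_inv B) \<and> inverts_mat (mat_inv B) B"
    unfolding mat_inv_def by (rule someI)
  hence BC: "B * mat_inv B = 1\<^sub>m n" and CB: "mat_inv B * B = 1\<^sub>m (dim_row (mat_inv B))"
    using B unfolding inverts_mat_def by auto
  have "dim_col (mat_inv B) = n" using arg_cong[OF BC, of dim_col] by simp
  moreover have "dim_row (mat_inv B) = n" using arg_cong[OF CB, of dim_col] B by simp
  ultimately show C: "mat_inv B \<in> carrier_mat n n" by auto
  show "B * mat_inv B = 1\<^sub>m n" by fact
  show "mat_inv B * B = 1\<^sub>m n" using CB C by simp
qed

lemma mat_inv_eqI:
  assumes B: "(B :: complex mat) \<in> carrier_mat n n" and C: "C \<in> carrier_mat n n" and CB: "C * B = 1\<^sub>m n"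
  shows "mat_inv B = C"
proof -
  note Bi = mat_inv[OF B invertible_matI[OF B C CB]]
  have "C = C * (B * mat_inv B)" using C by (simp add: Bi)
  also have "\<dots> = mat_inv B" using B C Bi(1) by (simp add: CB flip: assoc_mult_mat)
  finally show ?thesis by simp
qed

lemma mat_adjoint_mat_inv:
  assumes B: "(B :: complex mat) \<in> carrier_mat n n" and "invertible_mat B"
  shows "mat_adjoint (mat_inv B) * mat_adjoint B = 1\<^sub>m n" "mat_adjoint B * mat_adjoint (mat_inv B) = 1\<^sub>m n"
proof -
  note Bi = mat_inv[OF assms]
  show "mat_adjoint (mat_inv B) * mat_adjoint B = 1\<^sub>m n"
    using mat_adjoint_mult[OF B Bi(1)] by (simp add: Bi)
  show "mat_adjoint B * mat_adjoint (mat_inv B) = 1\<^sub>m n"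
    using mat_adjoint_mult[OF Bi(1) B] by (simp add: Bi)
qed

lemma invertible_mat_adjoint:
  assumes B: "(B :: complex mat) \<in> carrier_mat n n" "invertible_mat B"
  shows "invertible_mat (mat_adjoint B)"
  using invertible_matI[OF _ _ mat_adjoint_mat_inv(1)[OF B]] B mat_inv(1)[OF B] by simp

lemma mult_assoc_dims:
  "dim_col A = dim_row B \<Longrightarrow> dim_col B = dim_row C \<Longrightarrow> (A :: complex mat) * B * C = A * (B * C)"
  by (rule assoc_mult_mat[of A "dim_row A" "dim_col A" B "dim_col B" C "dim_col C"]) auto

lemma mult_cancel_left_inverse:
  assumes "(A :: complex mat) \<in> carrier_mat k n" "B \<in> carrier_mat n k" "A * B = 1\<^sub>m k"
    and "dim_row M = k"
  shows "A * (B * M) = M"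
proof -
  have "A * (B * M) = A * B * M"
    using assms by (intro assoc_mult_mat[symmetric, of A k n B k M "dim_col M"]) auto
  thus ?thesis using assms by simp
qed

lemma invertible_mat_mult:
  assumes B: "(B :: complex mat) \<in> carrier_mat n n" "invertible_mat B"
    and C: "C \<in> carrier_mat n n" "invertible_mat C"
  shows "invertible_mat (B * C)"
proof (rule invertible_matI)
  note Bi = mat_inv[OF B] and Ci = mat_inv[OF C]
  show "mat_inv C * mat_inv B * (B * C) = 1\<^sub>m n"
    using B C Bi Ci by (simp add: mult_assoc_dims carrier_matD mult_cancel_left_inverse)
qed (use B C mat_inv(1)[OF B] mat_inv(1)[OF C] in auto)

section \<open>Column spaces and the leading coordinate projection\<close>

lemma col_eq_mult_unit_vec:
  assumes "(B :: complex mat) \<in> carrier_mat n k" "j < k"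
  shows "col B j = B *\<^sub>v unit_vec k j"
  using assms by (intro eq_vecI)
    (auto simp: scalar_prod_def unit_vec_def if_distrib[of "\<lambda>x. _ * x"] sum.delta' cong: if_cong)

lemma col_space_subset_imp_factor:
  assumes B: "B \<in> carrier_mat n k" and C: "C \<in> carrier_mat n m"
    and sub: "col_space B \<subseteq> col_space C"
  shows "\<exists>X \<in> carrier_mat m k. B = C * X"
proof -
  have "\<exists>x \<in> carrier_vec m. col B j = C *\<^sub>v x" if "j < k" for j
  proof -
    have "col B j \<in> col_space B"
      using B that unfolding col_space_def by (auto simp: col_eq_mult_unit_vec)
    with sub C show ?thesis unfolding col_space_def by auto
  qed
  then obtain f where f: "\<And>j. j < k \<Longrightarrow> f j \<in> carrier_vec m \<and> col B j = C *\<^sub>v f j"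
    by metis
  define X where "X = mat m k (\<lambda>(i,j). f j $ i)"
  have X: "X \<in> carrier_mat m k" unfolding X_def by simp
  have "B = C * X"
  proof (rule mat_col_eqI)
    fix j assume "j < dim_col (C * X)"
    hence j: "j < k" using X by simp
    have "col X j = f j" using f[OF j] j unfolding X_def by (intro eq_vecI) auto
    thus "col B j = col (C * X) j" using f[OF j] col_mult2[OF C X j] by simp
  qed (use B C X in auto)
  with X show ?thesis by blast
qed

lemma col_space_eq_imp_invertible_factor:
  assumes B: "B \<in> carrier_mat n k" and C: "(C :: complex mat) \<in> carrier_mat n k"
    and L: "L \<in> carrier_mat k n" and LC: "L * C = 1\<^sub>m k"
    and eq: "col_space B = col_space C"
  shows "\<exists>T \<in> carrier_mat k k. invertible_mat T \<and> B = C * T"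
proof -
  obtain T where T: "T \<in> carrier_mat k k" and BT: "B = C * T"
    using col_space_subset_imp_factor[OF B C] eq by auto
  obtain X where X: "X \<in> carrier_mat k k" and CX: "C = B * X"
    using col_space_subset_imp_factor[OF C B] eq by auto
  have "C * (T * X) = C" using CX C T X unfolding BT by simp
  hence "L * C * (T * X) = L * C" using assoc_mult_mat[OF L C, of "T * X" k] T X by simp
  hence "T * X = 1\<^sub>m k" using T X by (simp add: LC)
  hence "X * T = 1\<^sub>m k" by (rule mat_mult_left_right_inverse[OF T X])
  with T X BT show ?thesis using invertible_matI[OF T X] by blast
qed

lemma first_cols_eq_mult:
  assumes "(B :: complex mat) \<in> carrier_mat m n" "k \<le> n"
  shows "first_cols B k = B * first_cols (1\<^sub>m n) k"
  using assms by (intro eq_matI)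
    (auto simp: first_cols_def scalar_prod_def if_distrib[of "\<lambda>x. _ * x"] sum.delta' cong: if_cong)

lemma adjoint_first_cols_one_mult:
  assumes "(X :: complex mat) \<in> carrier_mat n m" "k \<le> n"
  shows "mat_adjoint (first_cols (1\<^sub>m n) k) * X = mat k m (\<lambda>(i,j). X $$ (i,j))"
  using assms by (intro eq_matI)
    (auto simp: first_cols_def scalar_prod_def if_distrib[of cnj] if_distrib[of "\<lambda>x. x * _"] sum.delta
      cong: if_cong)

lemma mult_adjoint_first_cols_one:
  assumes "(X :: complex mat) \<in> carrier_mat m k" "k \<le> n"
  shows "X * mat_adjoint (first_cols (1\<^sub>m n) k) = mat m n (\<lambda>(i,j). if j < k then X $$ (i,j) else 0)"
  using assms by (intro eq_matI)
    (auto simp: first_cols_def scalar_prod_def if_distrib[of cnj] if_distrib[of "\<lambda>x. _ * x"] sum.delta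
      cong: if_cong)

definition lead_proj :: "nat \<Rightarrow> nat \<Rightarrow> complex mat" where
  "lead_proj n k = four_block_mat (1\<^sub>m k) (0\<^sub>m k (n - k)) (0\<^sub>m (n - k) k) (0\<^sub>m (n - k) (n - k))"

lemma lead_proj_carrier: "k \<le> n \<Longrightarrow> lead_proj n k \<in> carrier_mat n n"
  unfolding lead_proj_def carrier_mat_def by simp

lemma mat_adjoint_lead_proj: "k \<le> n \<Longrightarrow> mat_adjoint (lead_proj n k) = lead_proj n k"
  unfolding lead_proj_def by (subst mat_adjoint_four_block_mat) auto

lemma first_cols_one_carrier [simp]: "first_cols (1\<^sub>m n) k \<in> carrier_mat n k"
  unfolding first_cols_def by simp

lemma first_cols_one_mult_adjoint:
  assumes k: "k \<le> n"
  shows "first_cols (1\<^sub>m n) k * mat_adjoint (first_cols (1\<^sub>m n) k) = lead_proj n k"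
    and "mat_adjoint (first_cols (1\<^sub>m n) k) * first_cols (1\<^sub>m n) k = 1\<^sub>m k"
  using mult_adjoint_first_cols_one[OF first_cols_one_carrier k]
    adjoint_first_cols_one_mult[OF first_cols_one_carrier k] k
  by (auto simp: lead_proj_def first_cols_def intro!: eq_matI)

lemma adjoint_first_cols_diagonal:
  assumes D: "D \<in> carrier_mat n n" and diag: "diagonal_mat D" and k: "k \<le> n"
  defines "J \<equiv> first_cols (1\<^sub>m n) k"
  shows "mat_adjoint J * D * J * mat_adjoint J = mat_adjoint J * D"
proof -
  have "mat_adjoint J * D * J = first_cols (mat k n (\<lambda>(i,j). D $$ (i,j))) k"
    using D k unfolding J_def
    by (simp add: adjoint_first_cols_one_mult first_cols_eq_mult[of _ k n])
  also have "\<dots> = mat k k (\<lambda>(i,j). D $$ (i,j))"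
    using k by (auto simp: first_cols_def)
  finally have "mat_adjoint J * D * J * mat_adjoint J = mat k n (\<lambda>(i,j). if j < k then D $$ (i,j) else 0)"
    using k unfolding J_def by (simp add: mult_adjoint_first_cols_one[of _ k k n]) (auto intro!: eq_matI)
  also have "\<dots> = mat_adjoint J * D"
    using D k diag unfolding J_def
    by (auto simp: adjoint_first_cols_one_mult diagonal_mat_def intro!: eq_matI)
  finally show ?thesis .
qed

lemma first_cols_left_inverse:
  assumes V: "(V :: complex mat) \<in> carrier_mat n n" "invertible_mat V" and k: "k \<le> n"
  shows "\<exists>L \<in> carrier_mat k n. L * first_cols V k = 1\<^sub>m k"
proof
  define J where "J = first_cols (1\<^sub>m n) k"
  have J: "J \<in> carrier_mat n k" unfolding J_def by simp
  have JJ: "mat_adjoint J * J = 1\<^sub>m k" unfolding J_def by (rule first_cols_one_mult_adjoint(2)[OF k])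
  note Vi = mat_inv[OF V]
  show "mat_adjoint J * mat_inv V \<in> carrier_mat k n"
    using mult_carrier_mat[OF _ Vi(1)] J by simp
  show "mat_adjoint J * mat_inv V * first_cols V k = 1\<^sub>m k"
    unfolding first_cols_eq_mult[OF V(1) k] J_def[symmetric]
    using J V(1) Vi by (simp add: mult_assoc_dims carrier_matD mult_cancel_left_inverse JJ)
qed

lemma invertible_compression_diagonal:
  assumes D: "D \<in> carrier_mat n n" "invertible_mat D" and diag: "diagonal_mat D" and k: "k \<le> n"
  defines "J \<equiv> first_cols (1\<^sub>m n) k"
  shows "invertible_mat (mat_adjoint J * D * J)"
proof -
  note Di = mat_inv[OF D]
  have J: "J \<in> carrier_mat n k" unfolding J_def by simp
  note dims = carrier_matD[OF D(1)] carrier_matD[OF Di(1)] carrier_matD[OF J]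
  have JJ: "mat_adjoint J * J = 1\<^sub>m k" unfolding J_def by (rule first_cols_one_mult_adjoint(2)[OF k])
  have JDJ: "mat_adjoint J * D * J * mat_adjoint J = mat_adjoint J * D"
    unfolding J_def by (rule adjoint_first_cols_diagonal[OF D(1) diag k])
  have "mat_adjoint J * D * J * (mat_adjoint J * mat_inv D * J) =
      (mat_adjoint J * D * J * mat_adjoint J) * (mat_inv D * J)"
    by (simp add: mult_assoc_dims dims)
  also have "\<dots> = mat_adjoint J * (D * (mat_inv D * J))"
    unfolding JDJ by (simp add: mult_assoc_dims dims)
  also have "\<dots> = 1\<^sub>m k"
    by (simp add: mult_cancel_left_inverse[OF D(1) Di(1) Di(2)] JJ dims)
  finally have "mat_adjoint J * D * J * (mat_adjoint J * mat_inv D * J) = 1\<^sub>m k" .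
  moreover have "mat_adjoint J * D * J \<in> carrier_mat k k" "mat_adjoint J * mat_inv D * J \<in> carrier_mat k k"
    using D(1) Di(1) J by auto
  ultimately show ?thesis by (metis invertible_matI mat_mult_left_right_inverse)
qed

section \<open>The oblique projection\<close>

lemma proj_Pi_mult_right:
  assumes A: "A \<in> carrier_mat n n" and X: "X \<in> carrier_mat n k" and Y: "Y \<in> carrier_mat n k"
    and T: "T \<in> carrier_mat k k" "invertible_mat T" and S: "S \<in> carrier_mat k k" "invertible_mat S"
    and inv_C: "invertible_mat (mat_adjoint Y * A * X)"
  shows "proj_Pi A (X * T) (Y * S) = proj_Pi A X Y"
proof -
  define C where "C = mat_adjoint Y * A * X"
  have C_carrier: "C \<in> carrier_mat k k" unfolding C_def using A X Y by auto
  note Ti = mat_inv[OF T] and Si = mat_inv[OF S] and Ci = mat_inv[OF C_carrier inv_C[folded C_def]]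
  note SSi = mat_adjoint_mat_inv[OF S]
  have Sa: "mat_adjoint (mat_inv S) \<in> carrier_mat k k" "mat_adjoint S \<in> carrier_mat k k"
    using S(1) Si(1) by auto
  note dims = carrier_matD[OF A] carrier_matD[OF X] carrier_matD[OF Y] carrier_matD[OF T(1)]
    carrier_matD[OF S(1)] carrier_matD[OF C_carrier] carrier_matD[OF Ti(1)] carrier_matD[OF Si(1)]
    carrier_matD[OF Ci(1)]
  have "mat_adjoint (Y * S) * A * (X * T) = mat_adjoint S * C * T"
    unfolding mat_adjoint_mult[OF Y S(1)] C_def by (simp add: mult_assoc_dims dims)
  moreover have "mat_inv (mat_adjoint S * C * T) = mat_inv T * mat_inv C * mat_adjoint (mat_inv S)"
  proof (rule mat_inv_eqI)
    show "mat_inv T * mat_inv C * mat_adjoint (mat_inv S) * (mat_adjoint S * C * T) = 1\<^sub>m k"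
      by (simp add: mult_assoc_dims dims SSi mult_cancel_left_inverse[OF Ci(1) C_carrier Ci(3)]
          mult_cancel_left_inverse[OF Sa SSi(1)] Ti(3))
  qed (use mult_carrier_mat[OF mult_carrier_mat[OF Sa(2) C_carrier] T(1)]
      mult_carrier_mat[OF mult_carrier_mat[OF Ti(1) Ci(1)] Sa(1)] in auto)
  ultimately have "proj_Pi A (X * T) (Y * S) =
      X * (T * (mat_inv T * (mat_inv C * (mat_adjoint (mat_inv S) * (mat_adjoint S * (mat_adjoint Y * A))))))"
    unfolding proj_Pi_def mat_adjoint_mult[OF Y S(1)] by (simp add: mult_assoc_dims dims)
  also have "\<dots> = proj_Pi A X Y"
    unfolding proj_Pi_def C_def[symmetric]
    by (simp add: mult_assoc_dims dims mult_cancel_left_inverse[OF T(1) Ti(1) Ti(2)]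
        mult_cancel_left_inverse[OF Sa SSi(1)])
  finally show ?thesis .
qed

lemma compression_first_cols:
  assumes A: "A \<in> carrier_mat n n" and Vr: "Vr \<in> carrier_mat n n" and Vl: "Vl \<in> carrier_mat n n"
    and k: "k \<le> n"
  defines "J \<equiv> first_cols (1\<^sub>m n) k"
  shows "mat_adjoint (first_cols Vl k) * A * first_cols Vr k = mat_adjoint J * (mat_adjoint Vl * A * Vr) * J"
proof -
  have J: "J \<in> carrier_mat n k" unfolding J_def by simp
  note dims = carrier_matD[OF A] carrier_matD[OF Vr] carrier_matD[OF Vl] carrier_matD[OF J]
  show ?thesis
    unfolding first_cols_eq_mult[OF Vr k] first_cols_eq_mult[OF Vl k] J_def[symmetric]
      mat_adjoint_mult[OF Vl J]
    by (simp add: mult_assoc_dims dims)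
qed

lemma proj_Pi_first_cols:
  assumes A: "A \<in> carrier_mat n n" and Vr: "Vr \<in> carrier_mat n n" and Vl: "Vl \<in> carrier_mat n n"
    and diag: "diagonal_mat (mat_adjoint Vl * A * Vr)" and inv: "invertible_mat (mat_adjoint Vl * A * Vr)"
    and k: "k \<le> n"
  shows "proj_Pi A (first_cols Vr k) (first_cols Vl k) * Vr = Vr * lead_proj n k"
proof -
  define J where "J = first_cols (1\<^sub>m n) k"
  define D where "D = mat_adjoint Vl * A * Vr"
  define K where "K = mat_adjoint J * D * J"
  have J: "J \<in> carrier_mat n k" unfolding J_def by simp
  have D: "D \<in> carrier_mat n n" unfolding D_def using A Vr Vl by auto
  have K: "K \<in> carrier_mat k k" unfolding K_def using J D by auto
  have "invertible_mat K"
    unfolding K_def J_def by (rule invertible_compression_diagonal[OF D inv[folded D_def] diag[folded D_def] k])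
  note Ki = mat_inv[OF K this]
  note dims = carrier_matD[OF A] carrier_matD[OF Vr] carrier_matD[OF Vl] carrier_matD[OF J]
    carrier_matD[OF D] carrier_matD[OF K] carrier_matD[OF Ki(1)]
  have JD: "mat_adjoint J * D = K * mat_adjoint J"
    unfolding K_def J_def by (rule adjoint_first_cols_diagonal[OF D diag[folded D_def] k, symmetric])
  have C: "mat_adjoint (first_cols Vl k) * A * first_cols Vr k = K"
    unfolding K_def J_def D_def by (rule compression_first_cols[OF A Vr Vl k])
  have "proj_Pi A (first_cols Vr k) (first_cols Vl k) * Vr =
      Vr * (J * (mat_inv K * (mat_adjoint J * D)))"
    unfolding proj_Pi_def C
    unfolding first_cols_eq_mult[OF Vr k] first_cols_eq_mult[OF Vl k] J_def[symmetric]
      mat_adjoint_mult[OF Vl J] D_def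
    by (simp add: mult_assoc_dims dims)
  also have "\<dots> = Vr * (J * mat_adjoint J)"
    unfolding JD by (simp add: mult_cancel_left_inverse[OF Ki(1) K Ki(3)] dims)
  finally show ?thesis unfolding J_def first_cols_one_mult_adjoint(1)[OF k] .
qed

lemma proj_Pi_mult_eigvecs:
  assumes A: "A \<in> carrier_mat n n" "invertible_mat A"
    and Vr: "Vr \<in> carrier_mat n n" "invertible_mat Vr" and Vl: "Vl \<in> carrier_mat n n" "invertible_mat Vl"
    and diag: "diagonal_mat (mat_adjoint Vl * A * Vr)" and k: "k \<le> n"
    and P: "P \<in> carrier_mat n k" and R: "R \<in> carrier_mat n k"
    and col_P: "col_space P = col_space (first_cols Vr k)"
    and col_R: "col_space R = col_space (first_cols Vl k)"
  shows "proj_Pi A P R * Vr = Vr * lead_proj n k"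
proof -
  have adj_Vl: "mat_adjoint Vl \<in> carrier_mat n n" using Vl by simp
  have inv: "invertible_mat (mat_adjoint Vl * A * Vr)"
    using invertible_mat_mult[OF mult_carrier_mat[OF adj_Vl A(1)]
        invertible_mat_mult[OF adj_Vl invertible_mat_adjoint[OF Vl] A] Vr] .
  have Vr1: "first_cols Vr k \<in> carrier_mat n k" and Vl1: "first_cols Vl k \<in> carrier_mat n k"
    unfolding first_cols_def using Vr Vl by auto
  obtain T where T: "T \<in> carrier_mat k k" "invertible_mat T" and PT: "P = first_cols Vr k * T"
    using first_cols_left_inverse[OF Vr k] col_space_eq_imp_invertible_factor[OF P Vr1 _ _ col_P] by blast
  obtain S where S: "S \<in> carrier_mat k k" "invertible_mat S" and RS: "R = first_cols Vl k * S"
    using first_cols_left_inverse[OF Vl k] col_space_eq_imp_invertible_factor[OF R Vl1 _ _ col_R] by blast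
  have "invertible_mat (mat_adjoint (first_cols Vl k) * A * first_cols Vr k)"
    unfolding compression_first_cols[OF A(1) Vr(1) Vl(1) k]
    using Vl A Vr by (intro invertible_compression_diagonal inv diag k) auto
  hence "proj_Pi A P R = proj_Pi A (first_cols Vr k) (first_cols Vl k)"
    unfolding PT RS by (rule proj_Pi_mult_right[OF A(1) Vr1 Vl1 T S])
  thus ?thesis using proj_Pi_first_cols[OF A(1) Vr(1) Vl(1) diag inv k] by simp
qed

section \<open>\<open>N\<close>-orthogonality and congruence\<close>

lemma cscalar_prod_unit_vec:
  assumes "(v :: complex vec) \<in> carrier_vec n" "i < n"
  shows "v \<bullet>c unit_vec n i = v $ i"
  using assms by (simp add: scalar_prod_def unit_vec_def if_distrib[of cnj] if_distrib[of "\<lambda>x. _ * x"]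
      sum.delta' cong: if_cong)

lemma eq_mat_if_cscalar_prod_eq:
  assumes B: "(B :: complex mat) \<in> carrier_mat n m" and C: "C \<in> carrier_mat n m"
    and eq: "\<And>x y. x \<in> carrier_vec m \<Longrightarrow> y \<in> carrier_vec n \<Longrightarrow> (B *\<^sub>v x) \<bullet>c y = (C *\<^sub>v x) \<bullet>c y"
  shows "B = C"
proof (rule eq_matI)
  fix i j assume "i < dim_row C" "j < dim_col C"
  hence i: "i < n" and j: "j < m" using C by auto
  have entry: "(M *\<^sub>v unit_vec m j) \<bullet>c unit_vec n i = M $$ (i,j)" if "M \<in> carrier_mat n m" for M :: "complex mat"
    using col_eq_mult_unit_vec[OF that j] cscalar_prod_unit_vec[of "col M j" n i] that i j by simp
  show "B $$ (i,j) = C $$ (i,j)" using eq[of "unit_vec m j" "unit_vec n i"] entry[OF B] entry[OF C] by simp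
qed (use B C in auto)

lemma N_orthogonal_iff:
  assumes N: "N \<in> carrier_mat n n" and Z: "Z \<in> carrier_mat n n"
  shows "N_orthogonal n N Z \<longleftrightarrow> N * Z = mat_adjoint Z * N"
proof -
  have right: "N_inner N x (Z *\<^sub>v y) = ((mat_adjoint Z * N) *\<^sub>v x) \<bullet>c y"
    if "x \<in> carrier_vec n" "y \<in> carrier_vec n" for x y
    using cscalar_prod_mult_mat_vec[of "mat_adjoint Z" n n "N *\<^sub>v x" y] N Z that
    unfolding N_inner_def by (simp add: assoc_mult_mat_vec[of "mat_adjoint Z" n n N n x])
  have left: "N_inner N (Z *\<^sub>v x) y = ((N * Z) *\<^sub>v x) \<bullet>c y" if "x \<in> carrier_vec n" for x y
    using N Z that unfolding N_inner_def by simp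
  show ?thesis
  proof
    assume orth: "N_orthogonal n N Z"
    show "N * Z = mat_adjoint Z * N"
    proof (rule eq_mat_if_cscalar_prod_eq[of _ n n])
      fix x y :: "complex vec" assume "x \<in> carrier_vec n" "y \<in> carrier_vec n"
      thus "((N * Z) *\<^sub>v x) \<bullet>c y = ((mat_adjoint Z * N) *\<^sub>v x) \<bullet>c y"
        using orth left right unfolding N_orthogonal_def by metis
    qed (use N Z in auto)
  qed (auto simp: N_orthogonal_def left right)
qed

lemma congruence_mat_inv:
  assumes V: "(V :: complex mat) \<in> carrier_mat n n" "invertible_mat V" and X: "X \<in> carrier_mat n n"
  shows "mat_adjoint (mat_inv V) * (mat_adjoint V * X * V) * mat_inv V = X"
    and "mat_adjoint V * (mat_adjoint (mat_inv V) * X * mat_inv V) * V = X"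
proof -
  note Vi = mat_inv[OF V] and VVi = mat_adjoint_mat_inv[OF V]
  have Va: "mat_adjoint V \<in> carrier_mat n n" "mat_adjoint (mat_inv V) \<in> carrier_mat n n"
    using V Vi by auto
  note dims = carrier_matD[OF V(1)] carrier_matD[OF Vi(1)] carrier_matD[OF X]
  show "mat_adjoint (mat_inv V) * (mat_adjoint V * X * V) * mat_inv V = X"
    using X by (simp add: mult_assoc_dims dims mult_cancel_left_inverse[OF Va(2) Va(1) VVi(1)] Vi)
  show "mat_adjoint V * (mat_adjoint (mat_inv V) * X * mat_inv V) * V = X"
    using X by (simp add: mult_assoc_dims dims mult_cancel_left_inverse[OF Va(1) Va(2) VVi(2)] Vi)
qed

lemma congruence_cancel:
  assumes V: "(V :: complex mat) \<in> carrier_mat n n" "invertible_mat V"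
    and X: "X \<in> carrier_mat n n" and Y: "Y \<in> carrier_mat n n"
  shows "mat_adjoint V * X * V = mat_adjoint V * Y * V \<longleftrightarrow> X = Y"
  using congruence_mat_inv(1)[OF V X] congruence_mat_inv(1)[OF V Y] by metis

lemma congruence_eq_iff:
  assumes V: "(V :: complex mat) \<in> carrier_mat n n" "invertible_mat V"
    and X: "X \<in> carrier_mat n n" and Y: "Y \<in> carrier_mat n n"
  shows "X = mat_adjoint (mat_inv V) * Y * mat_inv V \<longleftrightarrow> mat_adjoint V * X * V = Y"
  using congruence_mat_inv[OF V X] congruence_mat_inv[OF V Y] by auto

lemma N_orthogonal_iff_commute:
  assumes N: "N \<in> carrier_mat n n" and V: "V \<in> carrier_mat n n" "invertible_mat V"
    and Z: "Z \<in> carrier_mat n n" and E: "E \<in> carrier_mat n n" "mat_adjoint E = E"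
    and ZV: "Z * V = V * E"
  shows "N_orthogonal n N Z \<longleftrightarrow> (mat_adjoint V * N * V) * E = E * (mat_adjoint V * N * V)"
proof -
  note dims = carrier_matD[OF N] carrier_matD[OF V(1)] carrier_matD[OF Z] carrier_matD[OF E(1)]
  have "mat_adjoint V * (N * Z) * V = (mat_adjoint V * N * V) * E"
    by (simp add: mult_assoc_dims dims ZV)
  moreover have "mat_adjoint V * (mat_adjoint Z * N) * V = E * (mat_adjoint V * N * V)"
  proof -
    have "mat_adjoint V * (mat_adjoint Z * N) * V = mat_adjoint V * mat_adjoint Z * (N * V)"
      by (simp add: mult_assoc_dims dims)
    also have "mat_adjoint V * mat_adjoint Z = E * mat_adjoint V"
      using mat_adjoint_mult[OF Z V(1)] mat_adjoint_mult[OF V(1) E(1)] E(2) by (simp add: ZV)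
    also have "E * mat_adjoint V * (N * V) = E * (mat_adjoint V * N * V)"
      by (simp add: mult_assoc_dims dims)
    finally show ?thesis .
  qed
  moreover have "N * Z \<in> carrier_mat n n" "mat_adjoint Z * N \<in> carrier_mat n n" using N Z by auto
  ultimately show ?thesis using N_orthogonal_iff[OF N Z] congruence_cancel[OF V] by metis
qed

section \<open>Positive definiteness\<close>

lemma hpd_congruence:
  assumes hpd: "hpd n N" and V: "V \<in> carrier_mat n n" "invertible_mat V"
  shows "hpd n (mat_adjoint V * N * V)"
proof -
  have N: "N \<in> carrier_mat n n" and herm: "mat_adjoint N = N"
    and pos: "\<And>x. x \<in> carrier_vec n \<Longrightarrow> x \<noteq> 0\<^sub>v n \<Longrightarrow> Re ((N *\<^sub>v x) \<bullet>c x) > 0"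
    using hpd unfolding hpd_def by auto
  note Vi = mat_inv[OF V]
  have "mat_adjoint (mat_adjoint V * N * V) = mat_adjoint V * N * V"
    using mat_adjoint_mult[OF mult_carrier_mat[OF _ N] V(1), of "mat_adjoint V" n]
      mat_adjoint_mult[OF _ N, of "mat_adjoint V" n] V(1) herm
    by (simp add: mult_assoc_dims carrier_matD[OF N] carrier_matD[OF V(1)])
  moreover have "Re (((mat_adjoint V * N * V) *\<^sub>v x) \<bullet>c x) > 0"
    if x: "x \<in> carrier_vec n" "x \<noteq> 0\<^sub>v n" for x
  proof -
    have "((mat_adjoint V * N * V) *\<^sub>v x) \<bullet>c x = (mat_adjoint V *\<^sub>v (N *\<^sub>v (V *\<^sub>v x))) \<bullet>c x"
      using assoc_mult_mat_vec[OF mult_carrier_mat[OF carrier_mat_adjoint[OF V(1)] N] V(1) x(1)]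
        assoc_mult_mat_vec[of "mat_adjoint V" n n N n "V *\<^sub>v x"] V(1) N x(1) by auto
    also have "\<dots> = (N *\<^sub>v (V *\<^sub>v x)) \<bullet>c (V *\<^sub>v x)"
      using cscalar_prod_mult_mat_vec[of "mat_adjoint V" n n "N *\<^sub>v (V *\<^sub>v x)" x] V(1) N x by simp
    finally have eq: "((mat_adjoint V * N * V) *\<^sub>v x) \<bullet>c x = (N *\<^sub>v (V *\<^sub>v x)) \<bullet>c (V *\<^sub>v x)" .
    have "mat_inv V *\<^sub>v (V *\<^sub>v x) = x"
      using V(1) Vi x by (simp flip: assoc_mult_mat_vec[of _ n n _ n x])
    hence "V *\<^sub>v x \<noteq> 0\<^sub>v n" using x Vi(1) by auto
    thus ?thesis unfolding eq using pos V(1) x by simp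
  qed
  ultimately show ?thesis using N V(1) unfolding hpd_def by auto
qed

lemma cscalar_prod_append:
  assumes "(a :: complex vec) \<in> carrier_vec n1" "v \<in> carrier_vec n1" "b \<in> carrier_vec n2" "w \<in> carrier_vec n2"
  shows "(a @\<^sub>v b) \<bullet>c (v @\<^sub>v w) = a \<bullet>c v + b \<bullet>c w"
proof -
  have "conjugate (v @\<^sub>v w) = conjugate v @\<^sub>v conjugate w"
    using assms by (intro eq_vecI) auto
  thus ?thesis using assms by (simp add: scalar_prod_append)
qed

lemma hermitian_four_block_diag:
  assumes herm: "mat_adjoint (four_block_mat G1 (0\<^sub>m n1 n2) (0\<^sub>m n2 n1) G2) =
      four_block_mat G1 (0\<^sub>m n1 n2) (0\<^sub>m n2 n1) G2"
    and G1: "(G1 :: complex mat) \<in> carrier_mat n1 n1" and G2: "G2 \<in> carrier_mat n2 n2"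
  shows "mat_adjoint G1 = G1" "mat_adjoint G2 = G2"
proof -
  have blocks: "four_block_mat (mat_adjoint G1) (0\<^sub>m n1 n2) (0\<^sub>m n2 n1) (mat_adjoint G2) =
      four_block_mat G1 (0\<^sub>m n1 n2) (0\<^sub>m n2 n1) G2"
    using herm G1 G2 by (subst (asm) mat_adjoint_four_block_mat) auto
  show "mat_adjoint G1 = G1"
  proof (rule eq_matI)
    fix i j assume "i < dim_row G1" "j < dim_col G1"
    thus "mat_adjoint G1 $$ (i,j) = G1 $$ (i,j)"
      using arg_cong[OF blocks, of "\<lambda>M. M $$ (i,j)"] G1 G2 by simp
  qed (use G1 in auto)
  show "mat_adjoint G2 = G2"
  proof (rule eq_matI)
    fix i j assume "i < dim_row G2" "j < dim_col G2"
    thus "mat_adjoint G2 $$ (i,j) = G2 $$ (i,j)"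
      using arg_cong[OF blocks, of "\<lambda>M. M $$ (i + n1, j + n1)"] G1 G2 by simp
  qed (use G2 in auto)
qed

lemma hpd_four_block_diag:
  assumes hpd: "hpd (n1 + n2) (four_block_mat G1 (0\<^sub>m n1 n2) (0\<^sub>m n2 n1) G2)"
    and G1: "G1 \<in> carrier_mat n1 n1" and G2: "G2 \<in> carrier_mat n2 n2"
  shows "hpd n1 G1" "hpd n2 G2"
proof -
  define G where "G = four_block_mat G1 (0\<^sub>m n1 n2) (0\<^sub>m n2 n1) G2"
  have pos: "\<And>x. x \<in> carrier_vec (n1 + n2) \<Longrightarrow> x \<noteq> 0\<^sub>v (n1 + n2) \<Longrightarrow> Re ((G *\<^sub>v x) \<bullet>c x) > 0"
    using hpd unfolding hpd_def G_def by auto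
  have zero_split: "0\<^sub>v (n1 + n2) = 0\<^sub>v n1 @\<^sub>v (0\<^sub>v n2 :: complex vec)"
    by (intro eq_vecI) auto
  have "Re ((G1 *\<^sub>v v) \<bullet>c v) > 0" if "v \<in> carrier_vec n1" "v \<noteq> 0\<^sub>v n1" for v
  proof -
    have "G *\<^sub>v (v @\<^sub>v 0\<^sub>v n2) = (G1 *\<^sub>v v) @\<^sub>v 0\<^sub>v n2"
      unfolding G_def using G1 G2 that by (subst mult_mat_vec_split) auto
    moreover have "v @\<^sub>v 0\<^sub>v n2 \<noteq> 0\<^sub>v (n1 + n2)"
      unfolding zero_split using that by (simp add: append_vec_eq)
    ultimately show ?thesis
      using pos[of "v @\<^sub>v 0\<^sub>v n2"] cscalar_prod_append[of "G1 *\<^sub>v v" n1 v "0\<^sub>v n2" n2 "0\<^sub>v n2"]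
        that G1 by simp
  qed
  moreover have "Re ((G2 *\<^sub>v v) \<bullet>c v) > 0" if "v \<in> carrier_vec n2" "v \<noteq> 0\<^sub>v n2" for v
  proof -
    have "G *\<^sub>v (0\<^sub>v n1 @\<^sub>v v) = 0\<^sub>v n1 @\<^sub>v (G2 *\<^sub>v v)"
      unfolding G_def using G1 G2 that by (subst mult_mat_vec_split) auto
    moreover have "0\<^sub>v n1 @\<^sub>v v \<noteq> 0\<^sub>v (n1 + n2)"
      unfolding zero_split using that by (simp add: append_vec_eq[of "0\<^sub>v n1" n1])
    ultimately show ?thesis
      using pos[of "0\<^sub>v n1 @\<^sub>v v"] cscalar_prod_append[of "0\<^sub>v n1" n1 "0\<^sub>v n1" "G2 *\<^sub>v v" n2 v]
        that G2 by simp
  qed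
  moreover have "mat_adjoint G1 = G1" "mat_adjoint G2 = G2"
    using hermitian_four_block_diag[OF _ G1 G2] hpd unfolding hpd_def by auto
  ultimately show "hpd n1 G1" "hpd n2 G2" using G1 G2 unfolding hpd_def by auto
qed

section \<open>Cholesky factorisation\<close>

text \<open>Stated for coefficient functions rather than matrices, so that the Cholesky induction can
  peel off the first row and column by an index shift.\<close>

definition hpd_fun :: "nat \<Rightarrow> (nat \<Rightarrow> nat \<Rightarrow> complex) \<Rightarrow> bool" where
  "hpd_fun m g \<longleftrightarrow> (\<forall>i<m. \<forall>j<m. g j i = cnj (g i j)) \<and>
     (\<forall>x. (\<exists>i<m. x i \<noteq> 0) \<longrightarrow> Re (\<Sum>i<m. \<Sum>j<m. cnj (x i) * g i j * x j) > 0)"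

definition schur_compl :: "(nat \<Rightarrow> nat \<Rightarrow> complex) \<Rightarrow> nat \<Rightarrow> nat \<Rightarrow> complex" where
  "schur_compl g i j = g (Suc i) (Suc j) - g (Suc i) 0 * g 0 (Suc j) / g 0 0"

lemma hpd_fun_pivot:
  assumes "hpd_fun (Suc m) g"
  shows "Re (g 0 0) > 0" "cnj (g 0 0) = g 0 0"
proof -
  have herm: "\<And>i j. i < Suc m \<Longrightarrow> j < Suc m \<Longrightarrow> g j i = cnj (g i j)"
    and pos: "\<And>x. \<exists>i<Suc m. x i \<noteq> 0 \<Longrightarrow> Re (\<Sum>i<Suc m. \<Sum>j<Suc m. cnj (x i) * g i j * x j) > 0"
    using assms unfolding hpd_fun_def by blast+
  define e :: "nat \<Rightarrow> complex" where "e i = (if i = 0 then 1 else 0)" for i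
  have "(\<Sum>i<Suc m. \<Sum>j<Suc m. cnj (e i) * g i j * e j) = g 0 0"
    unfolding e_def sum.lessThan_Suc_shift by simp
  moreover have "Re (\<Sum>i<Suc m. \<Sum>j<Suc m. cnj (e i) * g i j * e j) > 0"
    by (rule pos) (auto simp: e_def)
  ultimately show "Re (g 0 0) > 0" by simp
  show "cnj (g 0 0) = g 0 0" using herm[of 0 0] by simp
qed

lemma schur_compl_quadratic_form:
  fixes g :: "nat \<Rightarrow> nat \<Rightarrow> complex" and x :: "nat \<Rightarrow> complex" and m :: nat
  assumes a: "g 0 0 \<noteq> 0"
  defines "X \<equiv> \<lambda>k. if k = 0 then - (\<Sum>j<m. g 0 (Suc j) * x j) / g 0 0 else x (k - 1)"
  shows "(\<Sum>i<Suc m. \<Sum>j<Suc m. cnj (X i) * g i j * X j) =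
    (\<Sum>i<m. \<Sum>j<m. cnj (x i) * schur_compl g i j * x j)"
proof -
  have row: "(\<Sum>j<Suc m. g i j * X j) = g i 0 * X 0 + (\<Sum>j<m. g i (Suc j) * x j)" for i
    unfolding sum.lessThan_Suc_shift by (simp add: X_def)
  have "(\<Sum>i<Suc m. \<Sum>j<Suc m. cnj (X i) * g i j * X j) = (\<Sum>i<Suc m. cnj (X i) * (\<Sum>j<Suc m. g i j * X j))"
    by (simp add: sum_distrib_left mult.assoc del: sum.lessThan_Suc)
  also have "\<dots> = cnj (X 0) * (g 0 0 * X 0 + (\<Sum>j<m. g 0 (Suc j) * x j)) +
      (\<Sum>i<m. cnj (x i) * (g (Suc i) 0 * X 0 + (\<Sum>j<m. g (Suc i) (Suc j) * x j)))"
    unfolding row sum.lessThan_Suc_shift by (simp add: X_def)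
  also have "g 0 0 * X 0 + (\<Sum>j<m. g 0 (Suc j) * x j) = 0"
    using a by (simp add: X_def)
  also have "(\<Sum>i<m. cnj (x i) * (g (Suc i) 0 * X 0 + (\<Sum>j<m. g (Suc i) (Suc j) * x j))) =
      (\<Sum>i<m. \<Sum>j<m. cnj (x i) * schur_compl g i j * x j)"
    by (simp add: X_def schur_compl_def sum_distrib_left sum_subtractf sum_divide_distrib algebra_simps)
  finally show ?thesis by simp
qed

lemma hpd_fun_schur_compl:
  assumes hpd: "hpd_fun (Suc m) g"
  shows "hpd_fun m (schur_compl g)"
  unfolding hpd_fun_def
proof (intro conjI allI impI)
  have herm: "\<And>i j. i < Suc m \<Longrightarrow> j < Suc m \<Longrightarrow> g j i = cnj (g i j)"
    using hpd unfolding hpd_fun_def by blast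
  fix i j assume "i < m" "j < m"
  thus "schur_compl g j i = cnj (schur_compl g i j)"
    using herm[of "Suc i" "Suc j"] herm[of 0 "Suc j"] herm[of 0 "Suc i"] hpd_fun_pivot(2)[OF hpd]
    unfolding schur_compl_def by (simp add: mult.commute)
next
  fix x :: "nat \<Rightarrow> complex" assume "\<exists>i<m. x i \<noteq> 0"
  define X where "X = (\<lambda>k. if k = 0 then - (\<Sum>j<m. g 0 (Suc j) * x j) / g 0 0 else x (k - 1))"
  have pos: "\<And>x. \<exists>i<Suc m. x i \<noteq> 0 \<Longrightarrow> Re (\<Sum>i<Suc m. \<Sum>j<Suc m. cnj (x i) * g i j * x j) > 0"
    using hpd unfolding hpd_fun_def by blast
  have "g 0 0 \<noteq> 0" using hpd_fun_pivot(1)[OF hpd] by auto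
  hence eq: "(\<Sum>i<Suc m. \<Sum>j<Suc m. cnj (X i) * g i j * X j) =
      (\<Sum>i<m. \<Sum>j<m. cnj (x i) * schur_compl g i j * x j)"
    unfolding X_def by (rule schur_compl_quadratic_form)
  have "\<exists>i<Suc m. X i \<noteq> 0" using \<open>\<exists>i<m. x i \<noteq> 0\<close> unfolding X_def by force
  thus "Re (\<Sum>i<m. \<Sum>j<m. cnj (x i) * schur_compl g i j * x j) > 0"
    unfolding eq[symmetric] by (rule pos)
qed

lemma cholesky_extend:
  fixes g u' :: "nat \<Rightarrow> nat \<Rightarrow> complex"
  assumes herm: "\<And>i j. i < Suc m \<Longrightarrow> j < Suc m \<Longrightarrow> g j i = cnj (g i j)"
    and s: "s * s = g 0 0" "cnj s = s" "s \<noteq> 0"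
    and u': "\<And>i j. i < m \<Longrightarrow> j < m \<Longrightarrow> schur_compl g i j = (\<Sum>k<m. cnj (u' k i) * u' k j)"
    and ij: "i < Suc m" "j < Suc m"
  defines "u \<equiv> \<lambda>i j. if i = 0 then (if j = 0 then s else g 0 j / s)
      else if j = 0 then 0 else u' (i - 1) (j - 1)"
  shows "g i j = (\<Sum>k<Suc m. cnj (u k i) * u k j)"
proof -
  have sum: "(\<Sum>k<Suc m. cnj (u k i) * u k j) = cnj (u 0 i) * u 0 j + (\<Sum>k<m. cnj (u (Suc k) i) * u (Suc k) j)"
    by (simp only: sum.lessThan_Suc_shift)
  have g0: "g i 0 = cnj (g 0 i)" using herm[of 0 i] ij by simp
  show ?thesis
  proof (cases i; cases j)
    assume "i = 0" "j = 0" thus ?thesis unfolding sum using s by (simp add: u_def)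
  next
    fix j' assume "i = 0" "j = Suc j'" thus ?thesis unfolding sum using s by (simp add: u_def)
  next
    fix i' assume "i = Suc i'" "j = 0" thus ?thesis unfolding sum using s g0 by (simp add: u_def)
  next
    fix i' j' assume Suc: "i = Suc i'" "j = Suc j'"
    have "cnj (u 0 i) * u 0 j = g i 0 * g 0 j / g 0 0"
      using Suc s g0 by (simp add: u_def field_simps)
    moreover have "(\<Sum>k<m. cnj (u (Suc k) i) * u (Suc k) j) = g i j - g i 0 * g 0 j / g 0 0"
      using u'[of i' j'] Suc ij by (simp add: u_def schur_compl_def)
    ultimately show ?thesis unfolding sum by simp
  qed
qed

lemma cholesky_fun:
  assumes "hpd_fun m g"
  shows "\<exists>u. (\<forall>i j. j < i \<longrightarrow> u i j = 0) \<and> (\<forall>i<m. u i i \<noteq> 0) \<and>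
    (\<forall>i<m. \<forall>j<m. g i j = (\<Sum>k<m. cnj (u k i) * u k j))"
  using assms
proof (induction m arbitrary: g)
  case 0
  show ?case by auto
next
  case (Suc m)
  have herm: "\<And>i j. i < Suc m \<Longrightarrow> j < Suc m \<Longrightarrow> g j i = cnj (g i j)"
    using Suc.prems unfolding hpd_fun_def by blast
  define s where "s = complex_of_real (sqrt (Re (g 0 0)))"
  have "g 0 0 = complex_of_real (Re (g 0 0))"
    using hpd_fun_pivot(2)[OF Suc.prems] by (simp add: complex_eq_iff)
  hence s: "s * s = g 0 0" "cnj s = s" "s \<noteq> 0"
    using hpd_fun_pivot(1)[OF Suc.prems] unfolding s_def by (simp_all flip: of_real_mult)
  obtain u' where u': "\<forall>i j. j < i \<longrightarrow> u' i j = 0" "\<forall>i<m. u' i i \<noteq> 0"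
    "\<forall>i<m. \<forall>j<m. schur_compl g i j = (\<Sum>k<m. cnj (u' k i) * u' k j)"
    using Suc.IH[OF hpd_fun_schur_compl[OF Suc.prems]] by blast
  define u where "u i j = (if i = 0 then (if j = 0 then s else g 0 j / s)
      else if j = 0 then 0 else u' (i - 1) (j - 1))" for i j
  have "g i j = (\<Sum>k<Suc m. cnj (u k i) * u k j)" if "i < Suc m" "j < Suc m" for i j
    unfolding u_def
    by (rule cholesky_extend[where g = g and s = s and u' = u', OF herm s _ that]) (use u'(3) in auto)
  moreover have "\<forall>i j. j < i \<longrightarrow> u i j = 0" "\<forall>i<Suc m. u i i \<noteq> 0"
    using u'(1,2) s(3) unfolding u_def by (auto simp: less_Suc_eq_0_disj)
  ultimately show ?case by blast
qed

lemma hpd_imp_hpd_fun: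
  assumes "hpd n G"
  shows "hpd_fun n (\<lambda>i j. G $$ (i,j))"
proof -
  have G: "G \<in> carrier_mat n n" and herm: "mat_adjoint G = G"
    and pos: "\<And>v. v \<in> carrier_vec n \<Longrightarrow> v \<noteq> 0\<^sub>v n \<Longrightarrow> Re ((G *\<^sub>v v) \<bullet>c v) > 0"
    using assms unfolding hpd_def by auto
  have "G $$ (j,i) = cnj (G $$ (i,j))" if "i < n" "j < n" for i j
    using that G arg_cong[OF herm, of "\<lambda>M. M $$ (j,i)"] by simp
  moreover have "Re (\<Sum>i<n. \<Sum>j<n. cnj (x i) * G $$ (i,j) * x j) > 0" if "\<exists>i<n. x i \<noteq> 0" for x
  proof -
    have "vec n x \<noteq> 0\<^sub>v n" using that by (auto simp: vec_eq_iff)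
    moreover have "(G *\<^sub>v vec n x) \<bullet>c vec n x = (\<Sum>i<n. \<Sum>j<n. cnj (x i) * G $$ (i,j) * x j)"
      using G by (simp add: scalar_prod_def lessThan_atLeast0 sum_distrib_left sum_distrib_right mult_ac)
    ultimately show ?thesis using pos[of "vec n x"] by simp
  qed
  ultimately show ?thesis unfolding hpd_fun_def by blast
qed

lemma invertible_upper_triangular:
  assumes U: "(U :: complex mat) \<in> carrier_mat n n" and "upper_triangular U"
    and diag: "\<And>i. i < n \<Longrightarrow> U $$ (i,i) \<noteq> 0"
  shows "invertible_mat U"
proof -
  have "det U \<noteq> 0"
    using upper_triangular_imp_det_eq_0_iff[OF assms(1,2)] diag U by (auto simp: diag_mat_def)
  then obtain W where "W \<in> carrier_mat n n" "W * U = 1\<^sub>m n"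
    using det_non_zero_imp_unit[OF U, of undefined] unfolding Units_def ring_mat_def by auto
  thus ?thesis using invertible_matI[OF U] by blast
qed

lemma hpd_cholesky:
  assumes "hpd n G"
  shows "\<exists>U \<in> carrier_mat n n. upper_triangular U \<and> invertible_mat U \<and> G = mat_adjoint U * U"
proof -
  have G: "G \<in> carrier_mat n n" using assms unfolding hpd_def by simp
  obtain u where u: "\<forall>i j. j < i \<longrightarrow> u i j = 0" "\<forall>i<n. u i i \<noteq> 0"
    "\<forall>i<n. \<forall>j<n. G $$ (i,j) = (\<Sum>k<n. cnj (u k i) * u k j)"
    using cholesky_fun[OF hpd_imp_hpd_fun[OF assms]] by blast
  define U where "U = mat n n (\<lambda>(i,j). u i j)"
  have U: "U \<in> carrier_mat n n" unfolding U_def by simp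
  have "upper_triangular U" unfolding U_def using u(1) by auto
  moreover have "invertible_mat U"
    using invertible_upper_triangular[OF U \<open>upper_triangular U\<close>] u(2) unfolding U_def by simp
  moreover have "G = mat_adjoint U * U"
    using G u(3) unfolding U_def by (auto simp: scalar_prod_def lessThan_atLeast0 intro!: eq_matI)
  ultimately show ?thesis using U by blast
qed

section \<open>Block-diagonal Gram matrices\<close>

lemma index_lead_proj:
  "k \<le> n \<Longrightarrow> i < n \<Longrightarrow> j < n \<Longrightarrow> lead_proj n k $$ (i,j) = (if i = j then if j < k then 1 else 0 else 0)"
  unfolding lead_proj_def by auto

lemma lead_proj_mult:
  assumes "G \<in> carrier_mat n m" "k \<le> n"
  shows "lead_proj n k * G = mat n m (\<lambda>(i,j). if i < k then G $$ (i,j) else 0)"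
  using assms lead_proj_carrier[OF assms(2)]
  by (intro eq_matI) (auto simp: scalar_prod_def index_lead_proj if_distrib[of "\<lambda>x. x * _"] sum.delta
      cong: if_cong)

lemma mult_lead_proj:
  assumes "G \<in> carrier_mat m n" "k \<le> n"
  shows "G * lead_proj n k = mat m n (\<lambda>(i,j). if j < k then G $$ (i,j) else 0)"
  using assms lead_proj_carrier[OF assms(2)]
  by (intro eq_matI) (auto simp: scalar_prod_def index_lead_proj if_distrib[of "\<lambda>x. _ * x"] sum.delta'
      cong: if_cong)

lemma commute_lead_proj_iff:
  assumes G: "G \<in> carrier_mat n n" and k: "k \<le> n"
  shows "G * lead_proj n k = lead_proj n k * G \<longleftrightarrow>
    (\<forall>i<n. \<forall>j<n. (i < k) \<noteq> (j < k) \<longrightarrow> G $$ (i,j) = 0)"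
  unfolding mult_lead_proj[OF G k] lead_proj_mult[OF G k] by (auto simp: mat_eq_iff)

lemma block_diag_eq_four_block:
  assumes G: "G \<in> carrier_mat n n" and k: "k \<le> n"
    and block: "\<forall>i<n. \<forall>j<n. (i < k) \<noteq> (j < k) \<longrightarrow> G $$ (i,j) = 0"
  shows "G = four_block_mat (mat k k (\<lambda>(i,j). G $$ (i,j))) (0\<^sub>m k (n - k)) (0\<^sub>m (n - k) k)
    (mat (n - k) (n - k) (\<lambda>(i,j). G $$ (i + k, j + k)))"
  using G k block by (intro eq_matI) auto

lemma four_block_diag_adjoint_mult:
  assumes U1: "(U1 :: complex mat) \<in> carrier_mat k k" and U2: "U2 \<in> carrier_mat m m"
  shows "mat_adjoint (four_block_mat U1 (0\<^sub>m k m) (0\<^sub>m m k) U2) * four_block_mat U1 (0\<^sub>m k m) (0\<^sub>m m k) U2 =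
    four_block_mat (mat_adjoint U1 * U1) (0\<^sub>m k m) (0\<^sub>m m k) (mat_adjoint U2 * U2)"
proof -
  have "mat_adjoint U1 * U1 \<in> carrier_mat k k" "mat_adjoint U2 * U2 \<in> carrier_mat m m"
    using U1 U2 by auto
  thus ?thesis
    using mult_four_block_mat[OF carrier_mat_adjoint[OF U1] zero_carrier_mat zero_carrier_mat
        carrier_mat_adjoint[OF U2] U1 zero_carrier_mat zero_carrier_mat U2]
      mat_adjoint_four_block_mat[OF U1 zero_carrier_mat zero_carrier_mat U2] U1 U2
    by simp
qed

lemma invertible_four_block_diag:
  assumes U1: "(U1 :: complex mat) \<in> carrier_mat k k" "invertible_mat U1"
    and U2: "U2 \<in> carrier_mat m m" "invertible_mat U2"
  shows "invertible_mat (four_block_mat U1 (0\<^sub>m k m) (0\<^sub>m m k) U2)"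
proof (rule invertible_matI)
  note U1i = mat_inv[OF U1] and U2i = mat_inv[OF U2]
  show "four_block_mat (mat_inv U1) (0\<^sub>m k m) (0\<^sub>m m k) (mat_inv U2) *
      four_block_mat U1 (0\<^sub>m k m) (0\<^sub>m m k) U2 = 1\<^sub>m (k + m)"
    using U1 U2 U1i U2i mult_four_block_mat[OF U1i(1) zero_carrier_mat zero_carrier_mat U2i(1)
        U1(1) zero_carrier_mat zero_carrier_mat U2(1)] by simp
qed (use U1 U2 mat_inv(1)[OF U1] mat_inv(1)[OF U2] in auto)

lemma commute_lead_proj_iff_block_cholesky:
  assumes hpd: "hpd n G" and k: "k \<le> n"
  shows "G * lead_proj n k = lead_proj n k * G \<longleftrightarrow>
    (\<exists>U1 U2. U1 \<in> carrier_mat k k \<and> U2 \<in> carrier_mat (n - k) (n - k) \<and>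
       upper_triangular U1 \<and> upper_triangular U2 \<and>
       invertible_mat (four_block_mat U1 (0\<^sub>m k (n - k)) (0\<^sub>m (n - k) k) U2) \<and>
       G = mat_adjoint (four_block_mat U1 (0\<^sub>m k (n - k)) (0\<^sub>m (n - k) k) U2) *
         four_block_mat U1 (0\<^sub>m k (n - k)) (0\<^sub>m (n - k) k) U2)"
    (is "_ \<longleftrightarrow> (\<exists>U1 U2. ?factor U1 U2)")
proof
  have G: "G \<in> carrier_mat n n" using hpd unfolding hpd_def by simp
  assume "G * lead_proj n k = lead_proj n k * G"
  hence block: "\<forall>i<n. \<forall>j<n. (i < k) \<noteq> (j < k) \<longrightarrow> G $$ (i,j) = 0"
    using commute_lead_proj_iff[OF G k] by simp
  define G1 where "G1 = mat k k (\<lambda>(i,j). G $$ (i,j))"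
  define G2 where "G2 = mat (n - k) (n - k) (\<lambda>(i,j). G $$ (i + k, j + k))"
  have G1: "G1 \<in> carrier_mat k k" and G2: "G2 \<in> carrier_mat (n - k) (n - k)"
    unfolding G1_def G2_def by auto
  have G_eq: "G = four_block_mat G1 (0\<^sub>m k (n - k)) (0\<^sub>m (n - k) k) G2"
    unfolding G1_def G2_def by (rule block_diag_eq_four_block[OF G k block])
  have "hpd (k + (n - k)) (four_block_mat G1 (0\<^sub>m k (n - k)) (0\<^sub>m (n - k) k) G2)"
    using hpd k unfolding G_eq[symmetric] by simp
  note hpd_blocks = hpd_four_block_diag[OF this G1 G2]
  obtain U1 where U1: "U1 \<in> carrier_mat k k" "upper_triangular U1" "invertible_mat U1"
    and G1_eq: "G1 = mat_adjoint U1 * U1"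
    using hpd_cholesky[OF hpd_blocks(1)] by blast
  obtain U2 where U2: "U2 \<in> carrier_mat (n - k) (n - k)" "upper_triangular U2" "invertible_mat U2"
    and G2_eq: "G2 = mat_adjoint U2 * U2"
    using hpd_cholesky[OF hpd_blocks(2)] by blast
  have "?factor U1 U2"
    using U1 U2 invertible_four_block_diag[OF U1(1,3) U2(1,3)]
    unfolding four_block_diag_adjoint_mult[OF U1(1) U2(1)] G_eq G1_eq G2_eq by simp
  thus "\<exists>U1 U2. ?factor U1 U2" by blast
next
  have G: "G \<in> carrier_mat n n" using hpd unfolding hpd_def by simp
  assume "\<exists>U1 U2. ?factor U1 U2"
  then obtain U1 U2 where U1: "U1 \<in> carrier_mat k k" and U2: "U2 \<in> carrier_mat (n - k) (n - k)"
    and G_eq: "G = mat_adjoint (four_block_mat U1 (0\<^sub>m k (n - k)) (0\<^sub>m (n - k) k) U2) *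
         four_block_mat U1 (0\<^sub>m k (n - k)) (0\<^sub>m (n - k) k) U2" by blast
  have "\<forall>i<n. \<forall>j<n. (i < k) \<noteq> (j < k) \<longrightarrow> G $$ (i,j) = 0"
    unfolding G_eq four_block_diag_adjoint_mult[OF U1 U2] using U1 U2 k by auto
  thus "G * lead_proj n k = lead_proj n k * G" using commute_lead_proj_iff[OF G k] by simp
qed

theorem theorem3p1:
  fixes n nc :: nat and A M Vr Vl P R N :: "complex mat" and lam :: "nat \<Rightarrow> complex"
  assumes A: "A \<in> carrier_mat n n" and "invertible_mat A"
    and M: "M \<in> carrier_mat n n" and "invertible_mat M"
    and "diagonalizable (mat_inv M * A)"
    and "diagonalizable (mat_inv (mat_adjoint M) * mat_adjoint A)"
    and Vr: "Vr \<in> carrier_mat n n" and "invertible_mat Vr"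
    and Vl: "Vl \<in> carrier_mat n n" and "invertible_mat Vl"
    and "A * Vr = M * Vr * mat_diag n lam"
    and "mat_adjoint Vl * A = mat_diag n lam * mat_adjoint Vl * M"
    and "diagonal_mat (mat_adjoint Vl * A * Vr)"
    and "diagonal_mat (mat_adjoint Vl * M * Vr)"
    and "\<And>i j. i \<le> j \<Longrightarrow> j < n \<Longrightarrow> cmod (1 - lam j) \<le> cmod (1 - lam i)"
    and "1 \<le> nc" and "nc \<le> n"
    and P: "P \<in> carrier_mat n nc" and R: "R \<in> carrier_mat n nc"
    and "col_space P = col_space (first_cols Vr nc)"
    and "col_space R = col_space (first_cols Vl nc)"
    and "hpd n N"
  shows "N_orthogonal n N (proj_Pi A P R) \<longleftrightarrow>
    (\<exists>Ucc Uff. Ucc \<in> carrier_mat nc nc \<and> Uff \<in> carrier_mat (n - nc) (n - nc) \<and>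
       upper_triangular Ucc \<and> upper_triangular Uff \<and>
       (let Dt = four_block_mat Ucc (0\<^sub>m nc (n - nc)) (0\<^sub>m (n - nc) nc) Uff in
         invertible_mat Dt \<and>
         N = mat_adjoint (mat_inv Vr) * mat_adjoint Dt * Dt * mat_inv Vr))"
proof -
  note nc = \<open>nc \<le> n\<close> and Vr_inv = \<open>invertible_mat Vr\<close>
  define G where "G = mat_adjoint Vr * N * Vr"
  have N: "N \<in> carrier_mat n n" using \<open>hpd n N\<close> unfolding hpd_def by simp
  have Pi: "proj_Pi A P R \<in> carrier_mat n n" unfolding proj_Pi_def using P R A by auto
  have blocks: "four_block_mat U1 (0\<^sub>m nc (n - nc)) (0\<^sub>m (n - nc) nc) U2 \<in> carrier_mat n n"
    if "U1 \<in> carrier_mat nc nc" "U2 \<in> carrier_mat (n - nc) (n - nc)" for U1 U2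
    using four_block_carrier_mat[OF that] nc by simp
  have congr: "N = mat_adjoint (mat_inv Vr) * mat_adjoint D * D * mat_inv Vr \<longleftrightarrow> G = mat_adjoint D * D"
    if "D \<in> carrier_mat n n" for D
    using congruence_eq_iff[OF Vr Vr_inv N mult_carrier_mat[OF carrier_mat_adjoint[OF that] that]]
      that mat_inv(1)[OF Vr Vr_inv]
    unfolding G_def by (simp add: mult_assoc_dims carrier_matD)
  have "N_orthogonal n N (proj_Pi A P R) \<longleftrightarrow> G * lead_proj n nc = lead_proj n nc * G"
    unfolding G_def using proj_Pi_mult_eigvecs assms
    by (intro N_orthogonal_iff_commute[OF N Vr Vr_inv Pi lead_proj_carrier[OF nc] mat_adjoint_lead_proj[OF nc]])
       blast
  also have "\<dots> \<longleftrightarrow> (\<exists>U1 U2. U1 \<in> carrier_mat nc nc \<and> U2 \<in> carrier_mat (n - nc) (n - nc) \<and>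
       upper_triangular U1 \<and> upper_triangular U2 \<and>
       invertible_mat (four_block_mat U1 (0\<^sub>m nc (n - nc)) (0\<^sub>m (n - nc) nc) U2) \<and>
       G = mat_adjoint (four_block_mat U1 (0\<^sub>m nc (n - nc)) (0\<^sub>m (n - nc) nc) U2) *
         four_block_mat U1 (0\<^sub>m nc (n - nc)) (0\<^sub>m (n - nc) nc) U2)"
    unfolding G_def by (rule commute_lead_proj_iff_block_cholesky[OF hpd_congruence[OF \<open>hpd n N\<close> Vr Vr_inv] nc])
  finally show ?thesis unfolding Let_def using congr blocks by blast
qed

end
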